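(* For every pair of compatible counting-star formulas $C_1,C_2$, the formula $\big(\bigvee_{C_3:\ \mathrm{ERes}(C_1,C_2,C_3)}C_3\big)\Rightarrow (C_1*C_2)$ is valid, i.e. every $L$-environment satisfying some counting-star formula $C_3$ with $\mathrm{ERes}(C_1,C_2,C_3)$ satisfies $C_1*C_2$.
   Context: BASE. Fix a finite vocabulary $L=\mathcal A\cup\mathcal F$ ($\mathcal A$ unary, $\mathcal F$ binary predicate symbols); equality is a logical symbol not in $\mathcal F$, always interpreted as identity. Formulas: first-order logic with equality, counting quantifiers $\exists^{\ge k}x.G$, $\exists^{=k}x.G$, and spatial conjunction $*$. An environment has a finite nonempty domain $D$, interpretations of the predicate symbols, and an assignment to variables. $\mathrm{split}\,e\,[e_1,\dots,e_r]$ (same domain, same variable assignment) holds iff for each predicate symbol $P$, $e(P)$ is the disjoint union of the $e_i(P)$; $[\![G_1*G_2]\!]e$ holds iff some $e_1,e_2$ with $\mathrm{split}\,e\,[e_1,e_2]$ satisfy $[\![G_1]\!]e_1$, $[\![G_2]\!]e_2$. $G\sim H$ means equal truth values in all environments. NORMAL FORMS. Atoms over distinct variables $u_1,\dots,u_p$ are $A(u_i)$, $f(u_i,u_j)$, $u_i=u_j$; a GCCAT formula over them contains for each such atom exactly one of the atom or its negation (nothing else), with $u_i=u_j$ positive iff $i=j$. Fix distinct $x_1,\dots,x_n$ and $x$. $\mathrm{ext}(x_1,\dots,x_n;x)$ is the set of conjunctions containing, for each atom over $x,x_1,\dots,x_n$ containing $x$, exactly one of the atom or its negation, with $x=x$ positive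 and $x=x_i$, $x_i=x$ negated. For $p\ge1$, $C_p=\{0,\dots,p-1,p^+\}$; $\exists^{c}x.G$ means $\exists^{=c}x.G$ for integer $c$ and $\exists^{\ge p}x.G$ for $c=p^+$. A counting-star formula is $C=E\wedge F\wedge\bigwedge_{i=1}^{k}\exists^{s_i}x.F'_i$ with $E=\bigwedge_{j=1}^m y_j=x_{i_j}$ ($y_j$ distinct variables not among $x,x_1,\dots,x_n$), $F$ GCCAT over $x_1,\dots,x_n$, $F'_1,\dots,F'_k$ an enumeration of $\mathrm{ext}(x_1,\dots,x_n;x)$, $s_i\in C_q$ for some $q\ge2$. Two counting-star formulas are compatible if they have the same equality part $E$ and GCCAT parts over the same $x_1,\dots,x_n$. OPERATIONS. $\mathrm{Pos}(T)$ is the set of non-equality positive literals of a conjunction $T$. For $T_1,T_2\in\mathrm{ext}$, $T_1\oplus T_2$ is defined iff $\mathrm{Pos}(T_1)\cap\mathrm{Pos}(T_2)=\emptyset$ and is the unique $T\in\mathrm{ext}$ with $\mathrm{Pos}(T)=\mathrm{Pos}(T_1)\cup\mathrm{Pos}(T_2)$; for GCCAT $F_1,F_2$ over $x_1,\dots,x_n$, $F_1\otimes F_2$ is defined iff $\mathrm{Pos}(F_1)\cap\mathrm{Pos}(F_2)=\emptyset$ and is the unique GCCAT $F$ with $\mathrm{Pos}(F)=\mathrm{Pos}(F_1)\cup\mathrm{Pos}(F_2)$. TRANSLATION. $L'=L\cup\{B_1,B_2\}$ (new unary symbols, split by $*$ like all others). $\mathrm{Mark}_\emptyset(x)=\neg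 B_1(x)\wedge\neg B_2(x)$, $\mathrm{Mark}_{\{1\}}(x)=B_1(x)\wedge\neg B_2(x)$, $\mathrm{Mark}_{\{2\}}(x)=\neg B_1(x)\wedge B_2(x)$, $\mathrm{Mark}_{\{1,2\}}(x)=B_1(x)\wedge B_2(x)$. $\mathcal E_0$: GCCAT over $x_1,\dots,x_n$ whose only positive literals are $x_i=x_i$; $\varnothing_x$: element of $\mathrm{ext}$ whose only positive literal is $x=x$; $\delta(x):=\bigwedge_i x\ne x_i$. $G_E:=\mathcal E_0\wedge\forall x.(\delta(x)\to\varnothing_x\wedge\mathrm{Mark}_\emptyset(x))$; $K(F):=F\wedge\forall x.(\delta(x)\to\varnothing_x\wedge\mathrm{Mark}_\emptyset(x))$; $\mathrm{Any}_m(T):=\mathcal E_0\wedge\forall x.(\delta(x)\to(T\wedge\mathrm{Mark}_m(x))\vee(\varnothing_x\wedge\mathrm{Mark}_\emptyset(x)))$; $\mathrm{One}_m(T):=\mathrm{Any}_m(T)\wedge\exists^{=1}x.(\delta(x)\wedge T\wedge\mathrm{Mark}_m(x))$. $X_m(\exists^{0}x.T):=G_E$, $X_m(\exists^{i+1}x.T):=\mathrm{One}_m(T)*X_m(\exists^{i}x.T)$, $X_m(\exists^{p^+}x.T):=X_m(\exists^{p}x.T)*\mathrm{Any}_m(T)$. $S_m(C):=E\wedge\big(K(F)*X_m(\exists^{s_1}x.F'_1)*\dots*X_m(\exists^{s_k}x.F'_k)\big)$. RULES (when $T_1\oplus T_2$ is defined): (1) $\mathrm{One}_{\{1\}}(T_1)*\mathrm{One}_{\{2\}}(T_2)\to\mathrm{One}_{\{1,2\}}(T_1\oplus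 T_2)$; (2) $\mathrm{One}_{\{1\}}(T_1)*\mathrm{Any}_{\{2\}}(T_2)\to\mathrm{One}_{\{1,2\}}(T_1\oplus T_2)*\mathrm{Any}_{\{2\}}(T_2)$; (3) $\mathrm{Any}_{\{1\}}(T_1)*\mathrm{One}_{\{2\}}(T_2)\to\mathrm{Any}_{\{1\}}(T_1)*\mathrm{One}_{\{1,2\}}(T_1\oplus T_2)$; (4) $\mathrm{Any}_{\{1\}}(T_1)*\mathrm{Any}_{\{2\}}(T_2)\to\mathrm{Any}_{\{1\}}(T_1)*\mathrm{Any}_{\{2\}}(T_2)*\mathrm{Any}_{\{1,2\}}(T_1\oplus T_2)$; (5) $\mathrm{Any}_{\{1\}}(T)\to G_E$; (6) $\mathrm{Any}_{\{2\}}(T)\to G_E$. DERIVATION. For compatible $C_1=E\wedge F_1\wedge\dots$, $C_2=E\wedge F_2\wedge\dots$, write $S_{\{1\}}(C_1)*S_{\{2\}}(C_2)$ as $E\wedge W$ where $W$ is the spatial conjunction of $K(F_1)$, $K(F_2)$ and all (unfolded) $\mathrm{One}_m$, $\mathrm{Any}_m$, $G_E$ conjuncts of the $X_{\{1\}}$ and $X_{\{2\}}$ parts. $E\wedge H$ is a derivation result if $H$ is obtained from $W$ by: first replacing $K(F_1)*K(F_2)$ by $K(F_1\otimes F_2)$ if defined, else by $\mathit{false}$; then applying finitely many rule instances of (1)–(6) to spatial sub-conjunctions, modulo associativity and commutativity of $*$, the unit law $G*G_E\sim G$ and idempotence $\mathrm{Any}_m(T)*\mathrm{Any}_m(T)\sim\mathrm{Any}_m(T)$,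 with all applications of (1)–(4) preceding those of (5)–(6); and such that finally, apart from the $K$-conjunct, $H$ contains only conjuncts $\mathrm{One}_{\{1,2\}}(T)$ and $\mathrm{Any}_{\{1,2\}}(T)$. $\mathrm{ERes}(C_1,C_2,C_3)$ holds for a counting-star formula $C_3$ (same variables, same $E$) iff $S_{\{1,2\}}(C_3)$ coincides, modulo the same identifications, with some derivation result of $S_{\{1\}}(C_1)*S_{\{2\}}(C_2)$. *)

theory Defs
  imports Main "HOL-Library.Multiset"
begin

type_synonym var = nat

datatype ('u, 'b) fm =
    FTrue | FFalse
  | FUn 'u var | FBin 'b var var | FEq var var
  | FNeg "('u, 'b) fm" | FAnd "('u, 'b) fm" "('u, 'b) fm" | FOr "('u, 'b) fm" "('u, 'b) fm"
  | FEx var "('u, 'b) fm" | FAll var "('u, 'b) fm"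
  | FExGe nat var "('u, 'b) fm"
  | FExEq nat var "('u, 'b) fm"
  | FStar "('u, 'b) fm" "('u, 'b) fm"

definition FImp :: "('u, 'b) fm \<Rightarrow> ('u, 'b) fm \<Rightarrow> ('u, 'b) fm" where
  "FImp a b = FOr (FNeg a) b"

record ('d, 'u, 'b) env =
  env_dom :: "'d set"
  env_U   :: "'u \<Rightarrow> 'd set"
  env_B   :: "'b \<Rightarrow> ('d \<times> 'd) set"
  env_asg :: "var \<Rightarrow> 'd"

definition wf_env :: "('d, 'u, 'b) env \<Rightarrow> bool" where
  "wf_env e \<longleftrightarrow> finite (env_dom e) \<and> env_dom e \<noteq> {}
     \<and> (\<forall>P. env_U e P \<subseteq> env_dom e) \<and> (\<forall>f. env_B e f \<subseteq> env_dom e \<times> env_dom e)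
     \<and> (\<forall>v. env_asg e v \<in> env_dom e)"

definition split2 :: "('d, 'u, 'b) env \<Rightarrow> ('d, 'u, 'b) env \<Rightarrow> ('d, 'u, 'b) env \<Rightarrow> bool" where
  "split2 e e1 e2 \<longleftrightarrow> env_dom e1 = env_dom e \<and> env_dom e2 = env_dom e
     \<and> env_asg e1 = env_asg e \<and> env_asg e2 = env_asg e
     \<and> (\<forall>P. env_U e P = env_U e1 P \<union> env_U e2 P \<and> env_U e1 P \<inter> env_U e2 P = {})
     \<and> (\<forall>f. env_B e f = env_B e1 f \<union> env_B e2 f \<and> env_B e1 f \<inter> env_B e2 f = {})"

definition upd :: "('d, 'u, 'b) env \<Rightarrow> var \<Rightarrow> 'd \<Rightarrow> ('d, 'u, 'b) env" where
  "upd e x d = e\<lparr>env_asg := (env_asg e)(x := d)\<rparr>"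

primrec sat :: "('d, 'u, 'b) env \<Rightarrow> ('u, 'b) fm \<Rightarrow> bool" where
  "sat e FTrue = True"
| "sat e FFalse = False"
| "sat e (FUn P v) = (env_asg e v \<in> env_U e P)"
| "sat e (FBin f u v) = ((env_asg e u, env_asg e v) \<in> env_B e f)"
| "sat e (FEq u v) = (env_asg e u = env_asg e v)"
| "sat e (FNeg G) = (\<not> sat e G)"
| "sat e (FAnd G H) = (sat e G \<and> sat e H)"
| "sat e (FOr G H) = (sat e G \<or> sat e H)"
| "sat e (FEx x G) = (\<exists>d\<in>env_dom e. sat (upd e x d) G)"
| "sat e (FAll x G) = (\<forall>d\<in>env_dom e. sat (upd e x d) G)"
| "sat e (FExGe k x G) = (card {d \<in> env_dom e. sat (upd e x d) G} \<ge> k)"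
| "sat e (FExEq k x G) = (card {d \<in> env_dom e. sat (upd e x d) G} = k)"
| "sat e (FStar G H) = (\<exists>e1 e2. split2 e e1 e2 \<and> sat e1 G \<and> sat e2 H)"

datatype ('u, 'b) atom = AU 'u var | AB 'b var var

primrec atom_fm :: "('u, 'b) atom \<Rightarrow> ('u, 'b) fm" where
  "atom_fm (AU P v) = FUn P v"
| "atom_fm (AB f u v) = FBin f u v"

primrec avars :: "('u, 'b) atom \<Rightarrow> var set" where
  "avars (AU P v) = {v}"
| "avars (AB f u v) = {u, v}"

definition atoms_over :: "var set \<Rightarrow> ('u, 'b) atom set" where
  "atoms_over V = {a. avars a \<subseteq> V}"

definition atoms_x :: "var \<Rightarrow> var list \<Rightarrow> ('u, 'b) atom set" where
  "atoms_x x xs = {a \<in> atoms_over (insert x (set xs)). x \<in> avars a}"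

definition lit :: "('u, 'b) atom \<Rightarrow> bool \<Rightarrow> ('u, 'b) fm" where
  "lit a b = (if b then atom_fm a else FNeg (atom_fm a))"

definition conj_list :: "('u, 'b) fm list \<Rightarrow> ('u, 'b) fm" where
  "conj_list l = foldr FAnd l FTrue"

definition conj_set :: "('u, 'b) fm set \<Rightarrow> ('u, 'b) fm" where
  "conj_set S = conj_list (SOME l. set l = S \<and> distinct l)"

text \<open>A conjunction containing exactly one of each atom or its negation is determined by
  its set Pos of positive non-equality literals; we represent GCCAT formulas and elements of
  ext by these sets and build the formula from them.\<close>

definition gccat_fm :: "var list \<Rightarrow> ('u, 'b) atom set \<Rightarrow> ('u, 'b) fm" where
  "gccat_fm xs P = FAnd
     (conj_list [if i = j then FEq (xs ! i) (xs ! j) else FNeg (FEq (xs ! i) (xs ! j)).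
                 i \<leftarrow> [0..<length xs], j \<leftarrow> [0..<length xs]])
     (conj_set ((\<lambda>a. lit a (a \<in> P)) ` atoms_over (set xs)))"

definition gccat_sets :: "var list \<Rightarrow> ('u, 'b) atom set set" where
  "gccat_sets xs = Pow (atoms_over (set xs))"

definition ext_fm :: "var \<Rightarrow> var list \<Rightarrow> ('u, 'b) atom set \<Rightarrow> ('u, 'b) fm" where
  "ext_fm x xs P = FAnd (FEq x x)
     (FAnd (conj_list (concat [[FNeg (FEq x xi), FNeg (FEq xi x)]. xi \<leftarrow> xs]))
          (conj_set ((\<lambda>a. lit a (a \<in> P)) ` atoms_x x xs)))"

definition ext_sets :: "var \<Rightarrow> var list \<Rightarrow> ('u, 'b) atom set set" where
  "ext_sets x xs = Pow (atoms_x x xs)"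

section \<open>Counting-star formulas\<close>

text \<open>Elements of C_p: Exactly k for k < p, and AtLeast p (written p+).\<close>
datatype cval = Exactly nat | AtLeast nat

definition in_C :: "nat \<Rightarrow> cval \<Rightarrow> bool" where
  "in_C p c = (case c of Exactly k \<Rightarrow> k < p | AtLeast k \<Rightarrow> k = p)"

definition cnt_fm :: "var \<Rightarrow> cval \<Rightarrow> ('u, 'b) fm \<Rightarrow> ('u, 'b) fm" where
  "cnt_fm x c G = (case c of Exactly k \<Rightarrow> FExEq k x G | AtLeast k \<Rightarrow> FExGe k x G)"

text \<open>Data of a counting-star formula E /\ F /\ AND_{T in ext} EX^{s T} x. T :
  cs_E lists the pairs (y_j, i_j) (with 1-based index i_j), cs_xs = [x1..xn],
  cs_x = x, cs_F = Pos(F), cs_s T = the count attached to the ext element T.\<close>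
record ('u, 'b) cstar =
  cs_E  :: "(var \<times> nat) list"
  cs_xs :: "var list"
  cs_x  :: var
  cs_F  :: "('u, 'b) atom set"
  cs_s  :: "('u, 'b) atom set \<Rightarrow> cval"

definition is_cstar :: "('u, 'b) cstar \<Rightarrow> bool" where
  "is_cstar C \<longleftrightarrow> distinct (cs_xs C) \<and> cs_x C \<notin> set (cs_xs C)
     \<and> distinct (map fst (cs_E C))
     \<and> (\<forall>(y, i) \<in> set (cs_E C). y \<noteq> cs_x C \<and> y \<notin> set (cs_xs C) \<and> 1 \<le> i \<and> i \<le> length (cs_xs C))
     \<and> cs_F C \<in> gccat_sets (cs_xs C)
     \<and> (\<exists>q\<ge>2. \<forall>T \<in> ext_sets (cs_x C) (cs_xs C). in_C q (cs_s C T))"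

definition E_fm :: "(var \<times> nat) list \<Rightarrow> var list \<Rightarrow> ('u, 'b) fm" where
  "E_fm E xs = conj_list (map (\<lambda>(y, i). FEq y (xs ! (i - 1))) E)"

definition cs_fm :: "('u, 'b) cstar \<Rightarrow> ('u, 'b) fm" where
  "cs_fm C = FAnd (E_fm (cs_E C) (cs_xs C))
     (FAnd (gccat_fm (cs_xs C) (cs_F C))
          (conj_set ((\<lambda>T. cnt_fm (cs_x C) (cs_s C T) (ext_fm (cs_x C) (cs_xs C) T))
                       ` ext_sets (cs_x C) (cs_xs C))))"

definition compatible :: "('u, 'b) cstar \<Rightarrow> ('u, 'b) cstar \<Rightarrow> bool" where
  "compatible C1 C2 \<longleftrightarrow> cs_E C1 = cs_E C2 \<and> cs_xs C1 = cs_xs C2 \<and> cs_x C1 = cs_x C2"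

section \<open>Translation into L' = L + {B1, B2}\<close>

datatype 'u lsym = Orig 'u | BB1 | BB2

definition lift :: "('u, 'b) fm \<Rightarrow> ('u lsym, 'b) fm" where
  "lift = map_fm Orig id"

definition mark_fm :: "nat set \<Rightarrow> var \<Rightarrow> ('u lsym, 'b) fm" where
  "mark_fm m x = FAnd (if 1 \<in> m then FUn BB1 x else FNeg (FUn BB1 x))
                     (if 2 \<in> m then FUn BB2 x else FNeg (FUn BB2 x))"

definition delta_fm :: "var \<Rightarrow> var list \<Rightarrow> ('u, 'b) fm" where
  "delta_fm x xs = conj_list (map (\<lambda>xi. FNeg (FEq x xi)) xs)"

definition rest_empty :: "var \<Rightarrow> var list \<Rightarrow> ('u lsym, 'b) fm" where
  "rest_empty x xs = FAll x (FImp (delta_fm x xs) (FAnd (lift (ext_fm x xs {})) (mark_fm {} x)))"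

definition GE_fm :: "var \<Rightarrow> var list \<Rightarrow> ('u lsym, 'b) fm" where
  "GE_fm x xs = FAnd (lift (gccat_fm xs {})) (rest_empty x xs)"

definition K_fm :: "var \<Rightarrow> var list \<Rightarrow> ('u, 'b) atom set \<Rightarrow> ('u lsym, 'b) fm" where
  "K_fm x xs F = FAnd (lift (gccat_fm xs F)) (rest_empty x xs)"

definition Any_fm :: "var \<Rightarrow> var list \<Rightarrow> nat set \<Rightarrow> ('u, 'b) atom set \<Rightarrow> ('u lsym, 'b) fm" where
  "Any_fm x xs m T = FAnd (lift (gccat_fm xs {}))
     (FAll x (FImp (delta_fm x xs)
        (FOr (FAnd (lift (ext_fm x xs T)) (mark_fm m x))
            (FAnd (lift (ext_fm x xs {})) (mark_fm {} x)))))"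

definition One_fm :: "var \<Rightarrow> var list \<Rightarrow> nat set \<Rightarrow> ('u, 'b) atom set \<Rightarrow> ('u lsym, 'b) fm" where
  "One_fm x xs m T = FAnd (Any_fm x xs m T)
     (FExEq 1 x (FAnd (delta_fm x xs) (FAnd (lift (ext_fm x xs T)) (mark_fm m x))))"

text \<open>Spatial conjuncts occurring in S_m(C) and in derivations. A spatial conjunction of such
  conjuncts, taken modulo associativity and commutativity of *, is a multiset of tokens.\<close>
datatype ('u, 'b) tok =
    TK "('u, 'b) atom set"
  | TFalse
  | TGE
  | TOne "nat set" "('u, 'b) atom set"
  | TAny "nat set" "('u, 'b) atom set"

primrec tok_fm :: "var \<Rightarrow> var list \<Rightarrow> ('u, 'b) tok \<Rightarrow> ('u lsym, 'b) fm" where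
  "tok_fm x xs (TK F) = K_fm x xs F"
| "tok_fm x xs TFalse = FFalse"
| "tok_fm x xs TGE = GE_fm x xs"
| "tok_fm x xs (TOne m T) = One_fm x xs m T"
| "tok_fm x xs (TAny m T) = Any_fm x xs m T"

definition X_exact :: "nat set \<Rightarrow> ('u, 'b) atom set \<Rightarrow> nat \<Rightarrow> ('u, 'b) tok multiset" where
  "X_exact m T k = replicate_mset k (TOne m T) + {#TGE#}"

definition X_tok :: "nat set \<Rightarrow> ('u, 'b) atom set \<Rightarrow> cval \<Rightarrow> ('u, 'b) tok multiset" where
  "X_tok m T c = (case c of Exactly k \<Rightarrow> X_exact m T k
                          | AtLeast p \<Rightarrow> X_exact m T p + {#TAny m T#})"

definition S_tok :: "nat set \<Rightarrow> ('u, 'b) cstar \<Rightarrow> ('u, 'b) tok multiset" where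
  "S_tok m C = {#TK (cs_F C)#}
     + (\<Sum>T \<in> ext_sets (cs_x C) (cs_xs C). X_tok m T (cs_s C T))"

definition star_fm :: "('u lsym, 'b) fm list \<Rightarrow> ('u lsym, 'b) fm" where
  "star_fm l = foldr FStar (butlast l) (last l)"

text \<open>The formula S_m(C) itself (for reference; the derivation works on token multisets).\<close>
definition S_fm :: "nat set \<Rightarrow> ('u, 'b) cstar \<Rightarrow> ('u lsym, 'b) fm" where
  "S_fm m C = FAnd (lift (E_fm (cs_E C) (cs_xs C)))
     (star_fm (map (tok_fm (cs_x C) (cs_xs C)) (SOME l. mset l = S_tok m C)))"

section \<open>Derivations\<close>

text \<open>Identifications: unit law G * G_E ~ G and idempotence Any_m(T) * Any_m(T) ~ Any_m(T)
  (both directions; AC is built into multisets).\<close>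
definition ident :: "('u, 'b) tok multiset \<Rightarrow> ('u, 'b) tok multiset \<Rightarrow> bool" where
  "ident M M' \<longleftrightarrow>
     (\<exists>R. R \<noteq> {#} \<and> ((M = R + {#TGE#} \<and> M' = R) \<or> (M = R \<and> M' = R + {#TGE#})))
   \<or> (\<exists>R m T. (M = R + {#TAny m T, TAny m T#} \<and> M' = R + {#TAny m T#})
            \<or> (M = R + {#TAny m T#} \<and> M' = R + {#TAny m T, TAny m T#}))"

definition rules14 :: "('u, 'b) tok multiset \<Rightarrow> ('u, 'b) tok multiset \<Rightarrow> bool" where
  "rules14 L Rh \<longleftrightarrow> (\<exists>T1 T2. T1 \<inter> T2 = {} \<and>
     ((L = {#TOne {1} T1, TOne {2} T2#} \<and> Rh = {#TOne {1,2} (T1 \<union> T2)#})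
    \<or> (L = {#TOne {1} T1, TAny {2} T2#} \<and> Rh = {#TOne {1,2} (T1 \<union> T2), TAny {2} T2#})
    \<or> (L = {#TAny {1} T1, TOne {2} T2#} \<and> Rh = {#TAny {1} T1, TOne {1,2} (T1 \<union> T2)#})
    \<or> (L = {#TAny {1} T1, TAny {2} T2#}
         \<and> Rh = {#TAny {1} T1, TAny {2} T2, TAny {1,2} (T1 \<union> T2)#})))"

definition rules56 :: "('u, 'b) tok multiset \<Rightarrow> ('u, 'b) tok multiset \<Rightarrow> bool" where
  "rules56 L Rh \<longleftrightarrow> (\<exists>T. (L = {#TAny {1} T#} \<or> L = {#TAny {2} T#}) \<and> Rh = {#TGE#})"

definition apply_rule ::
  "(('u, 'b) tok multiset \<Rightarrow> ('u, 'b) tok multiset \<Rightarrow> bool)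
   \<Rightarrow> ('u, 'b) tok multiset \<Rightarrow> ('u, 'b) tok multiset \<Rightarrow> bool" where
  "apply_rule R M M' \<longleftrightarrow> (\<exists>L Rh Z. R L Rh \<and> M = L + Z \<and> M' = Rh + Z)"

definition phase1 :: "('u, 'b) tok multiset \<Rightarrow> ('u, 'b) tok multiset \<Rightarrow> bool" where
  "phase1 = (\<lambda>M M'. apply_rule rules14 M M' \<or> ident M M')\<^sup>*\<^sup>*"

definition phase2 :: "('u, 'b) tok multiset \<Rightarrow> ('u, 'b) tok multiset \<Rightarrow> bool" where
  "phase2 = (\<lambda>M M'. apply_rule rules56 M M' \<or> ident M M')\<^sup>*\<^sup>*"

definition W0 :: "('u, 'b) cstar \<Rightarrow> ('u, 'b) cstar \<Rightarrow> ('u, 'b) tok multiset" where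
  "W0 C1 C2 = (S_tok {1} C1 + S_tok {2} C2 - {#TK (cs_F C1), TK (cs_F C2)#})
     + {#if cs_F C1 \<inter> cs_F C2 = {} then TK (cs_F C1 \<union> cs_F C2) else TFalse#}"

definition final_form :: "('u, 'b) tok multiset \<Rightarrow> bool" where
  "final_form H \<longleftrightarrow> (\<forall>t \<in># H. (\<exists>F. t = TK F) \<or> t = TFalse \<or> t = TGE
       \<or> (\<exists>T. t = TOne {1,2} T \<or> t = TAny {1,2} T))"

definition deriv_result :: "('u, 'b) cstar \<Rightarrow> ('u, 'b) cstar \<Rightarrow> ('u, 'b) tok multiset \<Rightarrow> bool" where
  "deriv_result C1 C2 H \<longleftrightarrow> (\<exists>W1. phase1 (W0 C1 C2) W1 \<and> phase2 W1 H) \<and> final_form H"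

definition ERes :: "('u, 'b) cstar \<Rightarrow> ('u, 'b) cstar \<Rightarrow> ('u, 'b) cstar \<Rightarrow> bool" where
  "ERes C1 C2 C3 \<longleftrightarrow> compatible C1 C2
     \<and> cs_E C3 = cs_E C1 \<and> cs_xs C3 = cs_xs C1 \<and> cs_x C3 = cs_x C1
     \<and> (\<exists>H. deriv_result C1 C2 H \<and> ident\<^sup>*\<^sup>* (S_tok {1,2} C3) H)"

end

(*
  Spatial conjuncts are interpreted over abstract sets of facts. If the variables xs denote
  distinct elements of e, then e is described by the facts Glob a (a true atom over xs),
  Loc d a (a true atom containing x, with x denoting the anonymous element d) and Mark d i
  (the anonymous element d carries mark i). K(F), One_m(T), Any_m(T) and G_E become
  predicates on fact sets and * becomes disjoint union; then e satisfies a counting-star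
  formula C iff E and the distinctness of xs hold and the facts of e, marked with m, model
  S_m(C). Every rule (1)-(6) and every identification is sound when read backwards, so the
  facts of an environment satisfying C3, marked with {1,2}, model S_{1}(C1) * S_{2}(C2). A partition of these
  facts into models of the two sides yields a split of e: the first part keeps exactly the
  atoms recorded by its facts, the second part gets all the rest. Since every anonymous element
  carries both marks, it is counted on both sides.
*)

theory Submission
  imports Defs "HOL-Library.Disjoint_Sets"
begin

section \<open>Semantics of the normal forms\<close>

definition holds :: "('d, 'u, 'b) env \<Rightarrow> ('u, 'b) atom \<Rightarrow> bool" where
  "holds e a = sat e (atom_fm a)"

lemma holds_simps [simp]:
  "holds e (AU P v) \<longleftrightarrow> env_asg e v \<in> env_U e P"
  "holds e (AB f u v) \<longleftrightarrow> (env_asg e u, env_asg e v) \<in> env_B e f"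
  by (simp_all add: holds_def)

lemma upd_simps [simp]:
  "env_dom (upd e x d) = env_dom e" "env_U (upd e x d) = env_U e"
  "env_B (upd e x d) = env_B e" "env_asg (upd e x d) = (env_asg e)(x := d)"
  by (simp_all add: upd_def)

lemma sat_conj_list [simp]: "sat e (conj_list l) \<longleftrightarrow> (\<forall>G\<in>set l. sat e G)"
  by (induction l) (simp_all add: conj_list_def)

lemma sat_conj_set: "finite S \<Longrightarrow> sat e (conj_set S) \<longleftrightarrow> (\<forall>G\<in>S. sat e G)"
  unfolding conj_set_def by (metis (mono_tags, lifting) finite_distinct_list sat_conj_list someI_ex)

lemma sat_lit [simp]: "sat e (lit a b) \<longleftrightarrow> (holds e a \<longleftrightarrow> b)"
  by (simp add: lit_def holds_def)

lemma sat_E_fm_cong: "env_asg e' = env_asg e \<Longrightarrow> sat e' (E_fm E xs) \<longleftrightarrow> sat e (E_fm E xs)"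
  by (auto simp: E_fm_def)

lemma finite_atoms_over:
  assumes "finite V"
  shows "finite (atoms_over V :: ('u::finite, 'b::finite) atom set)"
proof -
  have "(atoms_over V :: ('u, 'b) atom set) \<subseteq> case_prod AU ` (UNIV \<times> V) \<union> (\<lambda>(f, u, v). AB f u v) ` (UNIV \<times> V \<times> V)"
  proof
    fix a :: "('u, 'b) atom"
    assume "a \<in> atoms_over V"
    then show "a \<in> case_prod AU ` (UNIV \<times> V) \<union> (\<lambda>(f, u, v). AB f u v) ` (UNIV \<times> V \<times> V)"
      by (cases a) (force simp: atoms_over_def)+
  qed
  then show ?thesis
    by (rule finite_subset) (use assms in auto)
qed

lemma finite_atoms_x: "finite (atoms_x x xs :: ('u::finite, 'b::finite) atom set)"
  unfolding atoms_x_def using finite_atoms_over[of "insert x (set xs)"] by auto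

lemma finite_ext_sets: "finite (ext_sets x xs :: ('u::finite, 'b::finite) atom set set)"
  by (simp add: ext_sets_def finite_atoms_x)

lemma sat_gccat_fm:
  "sat e (gccat_fm xs P :: ('u::finite, 'b::finite) fm) \<longleftrightarrow>
     distinct (map (env_asg e) xs) \<and> (\<forall>a\<in>atoms_over (set xs). holds e a \<longleftrightarrow> a \<in> P)"
proof -
  have "finite ((\<lambda>a. lit a (a \<in> P)) ` atoms_over (set xs) :: ('u, 'b) fm set)"
    by (simp add: finite_atoms_over)
  moreover have "distinct (map (env_asg e) xs) \<longleftrightarrow> (\<forall>i<length xs. \<forall>j<length xs.
      (i = j \<longrightarrow> env_asg e (xs ! i) = env_asg e (xs ! j)) \<and> (i \<noteq> j \<longrightarrow> env_asg e (xs ! i) \<noteq> env_asg e (xs ! j)))"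
    by (auto simp: distinct_conv_nth)
  ultimately show ?thesis
    by (auto simp: gccat_fm_def sat_conj_set split: if_splits)
qed

definition anon :: "var list \<Rightarrow> ('d, 'u, 'b) env \<Rightarrow> 'd set" where
  "anon xs e = env_dom e - env_asg e ` set xs"

text \<open>ltype x xs e d is Pos(T) for the unique T in ext(x1..xn;x) that d satisfies.\<close>

definition ltype :: "var \<Rightarrow> var list \<Rightarrow> ('d, 'u, 'b) env \<Rightarrow> 'd \<Rightarrow> ('u, 'b) atom set" where
  "ltype x xs e d = {a \<in> atoms_x x xs. holds (upd e x d) a}"

definition elems_of_type :: "var \<Rightarrow> var list \<Rightarrow> ('d, 'u, 'b) env \<Rightarrow> ('u, 'b) atom set \<Rightarrow> 'd set" where
  "elems_of_type x xs e T = {d \<in> anon xs e. ltype x xs e d = T}"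

lemma ltype_in_ext_sets: "ltype x xs e d \<in> ext_sets x xs"
  by (auto simp: ltype_def ext_sets_def)

lemma disjoint_family_elems_of_type: "disjoint_family_on (elems_of_type x xs e) X"
  by (auto simp: disjoint_family_on_def elems_of_type_def)

lemma sat_ext_fm:
  assumes "x \<notin> set xs" "T \<subseteq> atoms_x x xs"
  shows "sat (upd e x d) (ext_fm x xs T :: ('u::finite, 'b::finite) fm) \<longleftrightarrow>
     d \<notin> env_asg e ` set xs \<and> ltype x xs e d = T"
proof -
  have "finite ((\<lambda>a. lit a (a \<in> T)) ` atoms_x x xs :: ('u, 'b) fm set)"
    by (simp add: finite_atoms_x)
  moreover have "(\<forall>G\<in>set (concat [[FNeg (FEq x xi), FNeg (FEq xi x)]. xi \<leftarrow> xs]).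
      sat (upd e x d) (G :: ('u, 'b) fm)) \<longleftrightarrow> d \<notin> env_asg e ` set xs"
    using assms(1) by auto
  ultimately show ?thesis
    using assms(2) by (auto simp: ext_fm_def ltype_def sat_conj_set simp del: set_concat)
qed

text \<open>AtLeast is phrased without card, so that it is meaningful for infinite A (whose card
  is 0).\<close>

definition has_count :: "'d set \<Rightarrow> cval \<Rightarrow> bool" where
  "has_count A c = (case c of Exactly k \<Rightarrow> finite A \<and> card A = k
                             | AtLeast p \<Rightarrow> (\<exists>B\<subseteq>A. finite B \<and> card B = p))"

lemma sat_cnt_fm:
  assumes "finite (env_dom e)"
  shows "sat e (cnt_fm x c G) \<longleftrightarrow> has_count {d \<in> env_dom e. sat (upd e x d) G} c"
proof (cases c)
  case (AtLeast p)
  have "finite {d \<in> env_dom e. sat (upd e x d) G}"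
    using assms by simp
  then show ?thesis
    using AtLeast by (auto simp: cnt_fm_def has_count_def intro: card_mono obtain_subset_with_card_n)
qed (auto simp: cnt_fm_def has_count_def assms)

lemma sat_cs_fm_iff_elems_of_type:
  fixes C :: "('u::finite, 'b::finite) cstar"
  assumes "is_cstar C" "finite (env_dom e)"
  shows "sat e (cs_fm C) \<longleftrightarrow> sat e (E_fm (cs_E C) (cs_xs C))
     \<and> distinct (map (env_asg e) (cs_xs C))
     \<and> {a \<in> atoms_over (set (cs_xs C)). holds e a} = cs_F C
     \<and> (\<forall>T\<in>ext_sets (cs_x C) (cs_xs C). has_count (elems_of_type (cs_x C) (cs_xs C) e T) (cs_s C T))"
proof -
  let ?x = "cs_x C" and ?xs = "cs_xs C"
  have "finite ((\<lambda>T. cnt_fm ?x (cs_s C T) (ext_fm ?x ?xs T)) ` ext_sets ?x ?xs :: ('u, 'b) fm set)"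
    by (simp add: finite_ext_sets)
  moreover have "{d \<in> env_dom e. sat (upd e ?x d) (ext_fm ?x ?xs T :: ('u, 'b) fm)} = elems_of_type ?x ?xs e T"
    if "T \<in> ext_sets ?x ?xs" for T
    using that assms(1) by (auto simp: sat_ext_fm elems_of_type_def anon_def ext_sets_def is_cstar_def)
  moreover have "cs_F C \<subseteq> atoms_over (set ?xs)"
    using assms(1) by (simp add: is_cstar_def gccat_sets_def)
  ultimately show ?thesis
    using assms(2) by (auto simp: cs_fm_def sat_conj_set sat_gccat_fm sat_cnt_fm)
qed

section \<open>Fact-set models of spatial conjuncts\<close>

datatype ('d, 'u, 'b) fact = Glob "('u, 'b) atom" | Loc 'd "('u, 'b) atom" | Mark 'd nat

definition type_facts :: "('u, 'b) atom set \<Rightarrow> nat set \<Rightarrow> 'd set \<Rightarrow> ('d, 'u, 'b) fact set" where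
  "type_facts T m A = {Loc d a | d a. d \<in> A \<and> a \<in> T} \<union> {Mark d i | d i. d \<in> A \<and> i \<in> m}"

lemma type_facts_iff [simp]:
  "Glob a \<notin> type_facts T m A"
  "Loc d a \<in> type_facts T m A \<longleftrightarrow> d \<in> A \<and> a \<in> T"
  "Mark d i \<in> type_facts T m A \<longleftrightarrow> d \<in> A \<and> i \<in> m"
  by (auto simp: type_facts_def)

lemma type_facts_Un: "type_facts T m (A \<union> B) = type_facts T m A \<union> type_facts T m B"
  by (auto simp: type_facts_def)

lemma type_facts_empty [simp]: "type_facts T m {} = {}"
  by (auto simp: type_facts_def)

lemma ex_type_facts_empty [simp]: "\<exists>A. {} = type_facts T m A"
  by (rule exI[of _ "{}"]) simp

lemma type_facts_Un_Un: "type_facts (T1 \<union> T2) (m1 \<union> m2) A = type_facts T1 m1 A \<union> type_facts T2 m2 A"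
  by (auto simp: type_facts_def)

lemma type_facts_disjointI:
  "T1 \<inter> T2 = {} \<Longrightarrow> m1 \<inter> m2 = {} \<Longrightarrow> type_facts T1 m1 A \<inter> type_facts T2 m2 B = {}"
  by (auto simp: type_facts_def)

lemma type_facts_disjoint_iff:
  assumes "m \<noteq> {}"
  shows "type_facts T m A \<inter> type_facts T' m B = {} \<longleftrightarrow> A \<inter> B = {}"
proof
  assume disj: "type_facts T m A \<inter> type_facts T' m B = {}"
  obtain i where "i \<in> m"
    using assms by blast
  then have "Mark d i \<notin> type_facts T m A \<inter> type_facts T' m B" for d
    using disj by blast
  then show "A \<inter> B = {}"
    using \<open>i \<in> m\<close> by auto
qed (auto simp: type_facts_def)

lemma disjoint_family_type_facts_iff:
  "m \<noteq> {} \<Longrightarrow> disjoint_family_on (\<lambda>T. type_facts T m (A T)) X \<longleftrightarrow> disjoint_family_on A X"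
  by (simp add: disjoint_family_on_def type_facts_disjoint_iff)

fun tok_models :: "('u, 'b) tok \<Rightarrow> ('d, 'u, 'b) fact set \<Rightarrow> bool" where
  "tok_models (TK F) S \<longleftrightarrow> S = Glob ` F"
| "tok_models TFalse S \<longleftrightarrow> False"
| "tok_models TGE S \<longleftrightarrow> S = {}"
| "tok_models (TOne m T) S \<longleftrightarrow> (\<exists>d. S = type_facts T m {d})"
| "tok_models (TAny m T) S \<longleftrightarrow> (\<exists>A. S = type_facts T m A)"

inductive models :: "('u, 'b) tok multiset \<Rightarrow> ('d, 'u, 'b) fact set \<Rightarrow> bool" where
  models_empty: "models {#} {}"
| models_add: "tok_models t S1 \<Longrightarrow> models M S2 \<Longrightarrow> S1 \<inter> S2 = {} \<Longrightarrow> models (add_mset t M) (S1 \<union> S2)"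

lemma models_empty_iff [simp]: "models {#} S \<longleftrightarrow> S = {}"
  by (auto elim: models.cases intro: models_empty)

lemma models_remove:
  "models M S \<Longrightarrow> t \<in># M \<Longrightarrow>
     \<exists>S1 S2. tok_models t S1 \<and> models (M - {#t#}) S2 \<and> S1 \<inter> S2 = {} \<and> S = S1 \<union> S2"
proof (induction rule: models.induct)
  case (models_add t' S1 M S2)
  show ?case
  proof (cases "t = t'")
    case False
    then obtain A B where AB: "tok_models t A" "models (M - {#t#}) B" "A \<inter> B = {}" "S2 = A \<union> B"
      using models_add by auto
    then have "models (add_mset t' (M - {#t#})) (S1 \<union> B)"
      using models_add.hyps by (intro models.models_add) auto
    then show ?thesis
      using AB False models_add.hyps(3) by (intro exI[of _ A] exI[of _ "S1 \<union> B"]) auto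
  qed (use models_add in auto)
qed simp

lemma models_add_iff:
  "models (add_mset t M) S \<longleftrightarrow>
     (\<exists>S1 S2. tok_models t S1 \<and> models M S2 \<and> S1 \<inter> S2 = {} \<and> S = S1 \<union> S2)"
  using models_remove[of "add_mset t M" S t] by (auto intro: models_add)

lemma models_single [simp]: "models {#t#} S \<longleftrightarrow> tok_models t S"
  by (simp add: models_add_iff)

lemma models_pair_iff:
  "models {#t1, t2#} S \<longleftrightarrow> (\<exists>S1 S2. tok_models t1 S1 \<and> tok_models t2 S2 \<and> S1 \<inter> S2 = {} \<and> S = S1 \<union> S2)"
  by (simp add: models_add_iff)

lemma models_plus_iff:
  "models (M + N) S \<longleftrightarrow> (\<exists>S1 S2. models M S1 \<and> models N S2 \<and> S1 \<inter> S2 = {} \<and> S = S1 \<union> S2)"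
proof (induction M arbitrary: S)
  case (add t M)
  have "models (add_mset t M + N) S \<longleftrightarrow> (\<exists>S1 S2 S3. tok_models t S1 \<and> models M S2 \<and> models N S3
      \<and> S1 \<inter> S2 = {} \<and> S1 \<inter> S3 = {} \<and> S2 \<inter> S3 = {} \<and> S = S1 \<union> S2 \<union> S3)"
    by (simp add: models_add_iff add.IH) blast
  also have "\<dots> \<longleftrightarrow> (\<exists>S1 S2. models (add_mset t M) S1 \<and> models N S2 \<and> S1 \<inter> S2 = {} \<and> S = S1 \<union> S2)"
    by (simp add: models_add_iff) blast
  finally show ?case .
qed simp

lemma models_replace:
  fixes S :: "('d, 'u, 'b) fact set"
  assumes "models (L + Z) S" "\<And>S' :: ('d, 'u, 'b) fact set. models L S' \<Longrightarrow> models L' S'"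
  shows "models (L' + Z) S"
proof -
  obtain S1 S2 where "models L S1" "models Z S2" "S1 \<inter> S2 = {}" "S = S1 \<union> S2"
    using assms(1) models_plus_iff by blast
  then show ?thesis
    using assms(2) models_plus_iff by blast
qed

lemma models_add_TGE [simp]: "models (add_mset TGE M) S \<longleftrightarrow> models M S"
  by (simp add: models_add_iff)

lemma models_sum_iff:
  assumes "finite X"
  shows "models (\<Sum>T\<in>X. f T) S \<longleftrightarrow>
     (\<exists>P. S = (\<Union>T\<in>X. P T) \<and> (\<forall>T\<in>X. models (f T) (P T)) \<and> disjoint_family_on P X)"
  using assms
proof (induction X arbitrary: S rule: finite_induct)
  case (insert T X)
  show ?case
  proof
    assume "models (\<Sum>T\<in>insert T X. f T) S"
    then obtain S1 P where "models (f T) S1" "S1 \<inter> (\<Union>T\<in>X. P T) = {}" "S = S1 \<union> (\<Union>T\<in>X. P T)"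
      "\<forall>T\<in>X. models (f T) (P T)" "disjoint_family_on P X"
      using insert by (auto simp: models_plus_iff)
    moreover have "(\<Union>T'\<in>X. (P(T := S1)) T') = (\<Union>T\<in>X. P T)"
      "disjoint_family_on (P(T := S1)) X \<longleftrightarrow> disjoint_family_on P X"
      using insert.hyps(2) by (auto simp: disjoint_family_on_def)
    ultimately show "\<exists>P. S = (\<Union>T\<in>insert T X. P T) \<and> (\<forall>T\<in>insert T X. models (f T) (P T))
        \<and> disjoint_family_on P (insert T X)"
      using insert.hyps(2) by (intro exI[of _ "P(T := S1)"]) (auto simp: disjoint_family_on_insert)
  next
    assume "\<exists>P. S = (\<Union>T\<in>insert T X. P T) \<and> (\<forall>T\<in>insert T X. models (f T) (P T))
        \<and> disjoint_family_on P (insert T X)"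
    then show "models (\<Sum>T\<in>insert T X. f T) S"
      using insert by (auto simp: models_plus_iff disjoint_family_on_insert)
  qed
qed (simp add: disjoint_family_on_def)

lemma models_replicate_TOne_iff:
  assumes "m \<noteq> {}"
  shows "models (replicate_mset k (TOne m T)) S \<longleftrightarrow>
     (\<exists>A. S = type_facts T m A \<and> finite A \<and> card A = k)"
proof (induction k arbitrary: S)
  case (Suc k)
  have "models (replicate_mset (Suc k) (TOne m T)) S \<longleftrightarrow>
      (\<exists>d A. S = type_facts T m {d} \<union> type_facts T m A \<and>
         type_facts T m {d} \<inter> type_facts T m A = {} \<and> finite A \<and> card A = k)"
    by (auto simp: models_add_iff Suc.IH)
  also have "\<dots> \<longleftrightarrow> (\<exists>d A. S = type_facts T m (insert d A) \<and> d \<notin> A \<and> finite A \<and> card A = k)"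
    by (simp add: type_facts_disjoint_iff[OF assms] type_facts_Un[symmetric])
  also have "\<dots> \<longleftrightarrow> (\<exists>A. S = type_facts T m A \<and> finite A \<and> card A = Suc k)"
    by (auto simp: card_Suc_eq_finite)
  finally show ?case .
qed (auto intro: exI[of _ "{}"])

lemma models_X_tok_iff:
  assumes "m \<noteq> {}"
  shows "models (X_tok m T c) S \<longleftrightarrow> (\<exists>A. S = type_facts T m A \<and> has_count A c)"
proof (cases c)
  case (Exactly k)
  then show ?thesis
    by (simp add: X_tok_def X_exact_def models_replicate_TOne_iff[OF assms] has_count_def)
next
  case (AtLeast p)
  have "models (X_tok m T c) S \<longleftrightarrow> (\<exists>A B. S = type_facts T m B \<union> type_facts T m A
      \<and> type_facts T m B \<inter> type_facts T m A = {} \<and> finite A \<and> card A = p)"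
    using AtLeast by (simp add: X_tok_def X_exact_def models_add_iff models_replicate_TOne_iff[OF assms]) blast
  also have "\<dots> \<longleftrightarrow> (\<exists>A B. S = type_facts T m (B \<union> A) \<and> B \<inter> A = {} \<and> finite A \<and> card A = p)"
    by (simp add: type_facts_disjoint_iff[OF assms] type_facts_Un)
  also have "\<dots> \<longleftrightarrow> (\<exists>A. S = type_facts T m A \<and> has_count A c)"
  proof
    assume "\<exists>A B. S = type_facts T m (B \<union> A) \<and> B \<inter> A = {} \<and> finite A \<and> card A = p"
    then show "\<exists>A. S = type_facts T m A \<and> has_count A c"
      using AtLeast by (auto simp: has_count_def)
  next
    assume "\<exists>A. S = type_facts T m A \<and> has_count A c"
    then obtain A B where "S = type_facts T m A" "B \<subseteq> A" "finite B" "card B = p"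
      using AtLeast by (auto simp: has_count_def)
    then show "\<exists>A B. S = type_facts T m (B \<union> A) \<and> B \<inter> A = {} \<and> finite A \<and> card A = p"
      by (intro exI[of _ B] exI[of _ "A - B"]) (auto simp: Un_absorb2)
  qed
  finally show ?thesis .
qed

lemma models_S_tok_iff:
  fixes C :: "('u::finite, 'b::finite) cstar"
  assumes "m \<noteq> {}"
  shows "models (S_tok m C) S \<longleftrightarrow>
    (\<exists>A. S = Glob ` cs_F C \<union> (\<Union>T\<in>ext_sets (cs_x C) (cs_xs C). type_facts T m (A T))
       \<and> (\<forall>T\<in>ext_sets (cs_x C) (cs_xs C). has_count (A T) (cs_s C T))
       \<and> disjoint_family_on A (ext_sets (cs_x C) (cs_xs C)))"
proof -
  let ?X = "ext_sets (cs_x C) (cs_xs C)"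
  have "models (\<Sum>T\<in>?X. X_tok m T (cs_s C T)) S' \<longleftrightarrow>
      (\<exists>A. S' = (\<Union>T\<in>?X. type_facts T m (A T)) \<and> (\<forall>T\<in>?X. has_count (A T) (cs_s C T))
         \<and> disjoint_family_on A ?X)" (is "_ \<longleftrightarrow> ?rhs") for S' :: "('d, 'u, 'b) fact set"
  proof
    assume "models (\<Sum>T\<in>?X. X_tok m T (cs_s C T)) S'"
    then obtain P where P: "S' = (\<Union>T\<in>?X. P T)" "disjoint_family_on P ?X"
      "\<forall>T\<in>?X. \<exists>A. P T = type_facts T m A \<and> has_count A (cs_s C T)"
      by (auto simp: models_sum_iff finite_ext_sets models_X_tok_iff[OF assms])
    then obtain A where A: "\<forall>T\<in>?X. P T = type_facts T m (A T) \<and> has_count (A T) (cs_s C T)"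
      by metis
    have "disjoint_family_on (\<lambda>T. type_facts T m (A T)) ?X"
      using P(2) A by (simp add: disjoint_family_on_def)
    then show ?rhs
      using P(1) A by (intro exI[of _ A]) (simp add: disjoint_family_type_facts_iff[OF assms])
  next
    assume ?rhs
    then obtain A where "S' = (\<Union>T\<in>?X. type_facts T m (A T))"
      "\<forall>T\<in>?X. has_count (A T) (cs_s C T)" "disjoint_family_on A ?X"
      by blast
    then show "models (\<Sum>T\<in>?X. X_tok m T (cs_s C T)) S'"
      unfolding models_sum_iff[OF finite_ext_sets] models_X_tok_iff[OF assms]
      by (intro exI[of _ "\<lambda>T. type_facts T m (A T)"]) (auto simp: disjoint_family_type_facts_iff[OF assms])
  qed
  note sum_iff = this
  have disj: "Glob ` F \<inter> (\<Union>T\<in>?X. type_facts T m (A T)) = {}" for F A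
    by auto
  show ?thesis
    unfolding S_tok_def models_plus_iff models_single tok_models.simps sum_iff
    using disj by blast
qed

section \<open>The fact set of an environment\<close>

definition atom_facts :: "var \<Rightarrow> var list \<Rightarrow> ('d, 'u, 'b) env \<Rightarrow> ('d, 'u, 'b) fact set" where
  "atom_facts x xs e = Glob ` {a \<in> atoms_over (set xs). holds e a}
     \<union> {Loc d a | d a. d \<in> anon xs e \<and> a \<in> ltype x xs e d}"

definition marks :: "var list \<Rightarrow> nat set \<Rightarrow> ('d, 'u, 'b) env \<Rightarrow> ('d, 'u, 'b) fact set" where
  "marks xs m e = {Mark d i | d i. d \<in> anon xs e \<and> i \<in> m}"

definition facts :: "var \<Rightarrow> var list \<Rightarrow> nat set \<Rightarrow> ('d, 'u, 'b) env \<Rightarrow> ('d, 'u, 'b) fact set" where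
  "facts x xs m e = atom_facts x xs e \<union> marks xs m e"

lemma facts_eq_type_facts:
  fixes e :: "('d, 'u, 'b) env"
  shows "facts x xs m e = Glob ` {a \<in> atoms_over (set xs). holds e a}
     \<union> (\<Union>T\<in>ext_sets x xs. type_facts T m (elems_of_type x xs e T))"
proof (rule set_eqI)
  fix \<phi> :: "('d, 'u, 'b) fact"
  show "\<phi> \<in> facts x xs m e \<longleftrightarrow> \<phi> \<in> Glob ` {a \<in> atoms_over (set xs). holds e a}
     \<union> (\<Union>T\<in>ext_sets x xs. type_facts T m (elems_of_type x xs e T))"
    by (cases \<phi>) (auto simp: facts_def atom_facts_def marks_def elems_of_type_def ltype_in_ext_sets)
qed

lemma Loc_in_type_facts_Union:
  assumes "disjoint_family_on A X" "T \<in> X" "d \<in> A T"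
  shows "Loc d a \<in> (\<Union>T\<in>X. type_facts T m (A T)) \<longleftrightarrow> a \<in> T"
  using assms by (auto dest: disjoint_family_onD)

lemma type_facts_Union_inj:
  assumes "m \<noteq> {}" "disjoint_family_on A X" "disjoint_family_on B X"
    "(\<Union>T\<in>X. type_facts T m (A T)) = (\<Union>T\<in>X. type_facts T m (B T))" "T \<in> X"
  shows "A T = B T"
proof -
  obtain i where "i \<in> m"
    using assms(1) by blast
  have sub: "A T \<subseteq> B T" if dA: "disjoint_family_on A X" and dB: "disjoint_family_on B X"
    and eq: "(\<Union>T\<in>X. type_facts T m (A T)) = (\<Union>T\<in>X. type_facts T m (B T))" for A B
  proof
    fix d
    assume d: "d \<in> A T"
    then have "Mark d i \<in> (\<Union>T\<in>X. type_facts T m (A T))"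
      using \<open>i \<in> m\<close> assms(5) by auto
    then obtain T' where T': "T' \<in> X" "d \<in> B T'"
      unfolding eq by auto
    have "a \<in> T \<longleftrightarrow> a \<in> T'" for a
      using Loc_in_type_facts_Union[OF dA assms(5) d, of a m]
        Loc_in_type_facts_Union[OF dB T', of a m] eq by simp
    then have "T' = T"
      by blast
    then show "d \<in> B T"
      using T' by simp
  qed
  show ?thesis
    using sub[OF assms(2-4)] sub[OF assms(3,2) assms(4)[symmetric]] by (rule subset_antisym)
qed

lemma Mark_in_models_S_tok:
  fixes C :: "('u::finite, 'b::finite) cstar"
  assumes "m \<noteq> {}" "models (S_tok m C) S" "Mark d i \<in> S"
  shows "i \<in> m"
  using assms by (auto simp: models_S_tok_iff)

lemma sat_cs_fm_iff_models:
  fixes C :: "('u::finite, 'b::finite) cstar" and e :: "('d, 'u, 'b) env"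
  assumes "is_cstar C" "finite (env_dom e)" "m \<noteq> {}"
  shows "sat e (cs_fm C) \<longleftrightarrow> sat e (E_fm (cs_E C) (cs_xs C))
     \<and> distinct (map (env_asg e) (cs_xs C)) \<and> models (S_tok m C) (facts (cs_x C) (cs_xs C) m e)"
proof -
  let ?X = "ext_sets (cs_x C) (cs_xs C)" and ?R = "elems_of_type (cs_x C) (cs_xs C) e"
  let ?G = "{a \<in> atoms_over (set (cs_xs C)). holds e a}"
  have glob: "(Glob ` G \<union> (\<Union>T\<in>?X. type_facts T m (B T))) \<inter> range Glob = Glob ` G"
    and loc: "(Glob ` G \<union> (\<Union>T\<in>?X. type_facts T m (B T))) - range Glob = (\<Union>T\<in>?X. type_facts T m (B T))"
    for G and B :: "_ \<Rightarrow> 'd set"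
    by auto
  have "models (S_tok m C) (facts (cs_x C) (cs_xs C) m e) \<longleftrightarrow>
      ?G = cs_F C \<and> (\<forall>T\<in>?X. has_count (?R T) (cs_s C T))"
  proof
    assume "models (S_tok m C) (facts (cs_x C) (cs_xs C) m e)"
    then obtain A where A: "Glob ` ?G \<union> (\<Union>T\<in>?X. type_facts T m (?R T))
        = Glob ` cs_F C \<union> (\<Union>T\<in>?X. type_facts T m (A T))"
      "\<forall>T\<in>?X. has_count (A T) (cs_s C T)" "disjoint_family_on A ?X"
      by (auto simp: models_S_tok_iff[OF assms(3)] facts_eq_type_facts)
    have "(Glob ` ?G :: ('d, 'u, 'b) fact set) = (Glob ` ?G \<union> (\<Union>T\<in>?X. type_facts T m (?R T))) \<inter> range Glob"
      by (rule glob[symmetric])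
    also have "\<dots> = Glob ` cs_F C"
      unfolding A(1) by (rule glob)
    finally have G: "?G = cs_F C"
      by (simp add: inj_image_eq_iff inj_def)
    have "(\<Union>T\<in>?X. type_facts T m (?R T))
        = (Glob ` ?G \<union> (\<Union>T\<in>?X. type_facts T m (?R T))) - range Glob"
      by (rule loc[symmetric])
    also have "\<dots> = (\<Union>T\<in>?X. type_facts T m (A T))"
      unfolding A(1) by (rule loc)
    finally have "?R T = A T" if "T \<in> ?X" for T
      using type_facts_Union_inj[OF assms(3) disjoint_family_elems_of_type A(3) _ that] by simp
    then show "?G = cs_F C \<and> (\<forall>T\<in>?X. has_count (?R T) (cs_s C T))"
      using G A(2) by simp
  next
    assume "?G = cs_F C \<and> (\<forall>T\<in>?X. has_count (?R T) (cs_s C T))"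
    then show "models (S_tok m C) (facts (cs_x C) (cs_xs C) m e)"
      unfolding models_S_tok_iff[OF assms(3)] facts_eq_type_facts
      by (intro exI[of _ ?R]) (simp add: disjoint_family_elems_of_type)
  qed
  then show ?thesis
    using sat_cs_fm_iff_elems_of_type[OF assms(1,2)] by simp
qed

section \<open>Soundness of derivations\<close>

lemma rtranclp_reflects:
  assumes "R\<^sup>*\<^sup>* a b" "P b" "\<And>x y. R x y \<Longrightarrow> P y \<Longrightarrow> P x"
  shows "P a"
  using assms(1,2) by (induction rule: converse_rtranclp_induct) (auto intro: assms(3))

lemma rules14_reflects:
  assumes "rules14 L Rh" "models Rh S"
  shows "models L S"
proof -
  obtain T1 T2 where "T1 \<inter> T2 = {}" and rule:
    "(L = {#TOne {1} T1, TOne {2} T2#} \<and> Rh = {#TOne {1,2} (T1 \<union> T2)#})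
    \<or> (L = {#TOne {1} T1, TAny {2} T2#} \<and> Rh = {#TOne {1,2} (T1 \<union> T2), TAny {2} T2#})
    \<or> (L = {#TAny {1} T1, TOne {2} T2#} \<and> Rh = {#TAny {1} T1, TOne {1,2} (T1 \<union> T2)#})
    \<or> (L = {#TAny {1} T1, TAny {2} T2#}
         \<and> Rh = {#TAny {1} T1, TAny {2} T2, TAny {1,2} (T1 \<union> T2)#})"
    using assms(1) unfolding rules14_def by blast
  then have disj: "type_facts T1 {1} A \<inter> type_facts T2 {2} B = {}" for A B
    by (simp add: type_facts_disjointI)
  have split: "type_facts (T1 \<union> T2) {1,2} A = type_facts T1 {1} A \<union> type_facts T2 {2} A" for A
    using type_facts_Un_Un[of T1 T2 "{1}" "{2}" A] by (simp add: insert_commute)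
  from rule show ?thesis
  proof (elim disjE conjE)
    assume L: "L = {#TOne {1} T1, TOne {2} T2#}" and "Rh = {#TOne {1,2} (T1 \<union> T2)#}"
    then obtain d where "S = type_facts T1 {1} {d} \<union> type_facts T2 {2} {d}"
      using assms(2) split by auto
    then show ?thesis
      unfolding L models_pair_iff tok_models.simps using disj by blast
  next
    assume L: "L = {#TOne {1} T1, TAny {2} T2#}" and "Rh = {#TOne {1,2} (T1 \<union> T2), TAny {2} T2#}"
    then obtain d A where "S = type_facts (T1 \<union> T2) {1,2} {d} \<union> type_facts T2 {2} A"
      using assms(2) by (auto simp: models_pair_iff)
    then have "S = type_facts T1 {1} {d} \<union> type_facts T2 {2} (insert d A)"
      by (auto simp: type_facts_def)
    then show ?thesis
      unfolding L models_pair_iff tok_models.simps using disj by blast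
  next
    assume L: "L = {#TAny {1} T1, TOne {2} T2#}" and "Rh = {#TAny {1} T1, TOne {1,2} (T1 \<union> T2)#}"
    then obtain d A where "S = type_facts T1 {1} A \<union> type_facts (T1 \<union> T2) {1,2} {d}"
      using assms(2) by (auto simp: models_pair_iff)
    then have "S = type_facts T1 {1} (insert d A) \<union> type_facts T2 {2} {d}"
      by (auto simp: type_facts_def)
    then show ?thesis
      unfolding L models_pair_iff tok_models.simps using disj by blast
  next
    assume L: "L = {#TAny {1} T1, TAny {2} T2#}"
      and "Rh = {#TAny {1} T1, TAny {2} T2, TAny {1,2} (T1 \<union> T2)#}"
    then obtain A1 A2 A3
      where "S = type_facts T1 {1} A1 \<union> type_facts T2 {2} A2 \<union> type_facts (T1 \<union> T2) {1,2} A3"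
      using assms(2) by (auto simp: models_add_iff Un_assoc)
    then have "S = type_facts T1 {1} (A1 \<union> A3) \<union> type_facts T2 {2} (A2 \<union> A3)"
      by (auto simp: type_facts_def)
    then show ?thesis
      unfolding L models_pair_iff tok_models.simps using disj by blast
  qed
qed

lemma rules56_reflects: "rules56 L Rh \<Longrightarrow> models Rh S \<Longrightarrow> models L S"
  by (auto simp: rules56_def)

lemma models_TAny_idem:
  fixes S :: "('d, 'u, 'b) fact set"
  shows "models (add_mset (TAny m T) (add_mset (TAny m T) M)) S \<longleftrightarrow> models (add_mset (TAny m T) M) S"
proof -
  have "models {#TAny m T, TAny m T#} S' \<longleftrightarrow> models {#TAny m T#} S'" for S' :: "('d, 'u, 'b) fact set"
  proof
    assume "models {#TAny m T, TAny m T#} S'"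
    then obtain A B where "S' = type_facts T m A \<union> type_facts T m B"
      by (auto simp: models_pair_iff)
    then show "models {#TAny m T#} S'"
      by (auto simp: type_facts_Un[symmetric])
  next
    assume "models {#TAny m T#} S'"
    then obtain A where "S' = type_facts T m A"
      by auto
    then show "models {#TAny m T, TAny m T#} S'"
      unfolding models_pair_iff tok_models.simps by (intro exI[of _ S'] exI[of _ "{}"]) auto
  qed
  then show ?thesis
    using models_replace[of "{#TAny m T, TAny m T#}" M S "{#TAny m T#}"]
      models_replace[of "{#TAny m T#}" M S "{#TAny m T, TAny m T#}"] by auto
qed

lemma ident_models_iff: "ident M M' \<Longrightarrow> models M S \<longleftrightarrow> models M' S"
  by (auto simp: ident_def models_TAny_idem)

lemma rewriting_reflects:
  fixes S :: "('d, 'u, 'b) fact set"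
  assumes "(\<lambda>M M'. apply_rule R M M' \<or> ident M M')\<^sup>*\<^sup>* M M'" "models M' S"
    and sound: "\<And>L Rh (S :: ('d, 'u, 'b) fact set). R L Rh \<Longrightarrow> models Rh S \<Longrightarrow> models L S"
  shows "models M S"
proof (rule rtranclp_reflects[where P = "\<lambda>N. models N S", OF assms(1,2)])
  fix N N'
  assume step: "apply_rule R N N' \<or> ident N N'" and "models N' S"
  show "models N S"
  proof (cases "ident N N'")
    case False
    then obtain L Rh Z where "R L Rh" "N = L + Z" "N' = Rh + Z"
      using step unfolding apply_rule_def by blast
    then show ?thesis
      using models_replace[of Rh Z S L] sound \<open>models N' S\<close> by simp
  qed (use \<open>models N' S\<close> ident_models_iff in blast)
qed

lemma models_merge_K:
  "models {#if F1 \<inter> F2 = {} then TK (F1 \<union> F2) else TFalse#} S \<Longrightarrow> models {#TK F1, TK F2#} S"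
  by (cases "F1 \<inter> F2 = {}") (auto simp: models_pair_iff image_Un)

lemma W0_reflects:
  fixes S :: "('d, 'u, 'b) fact set"
  assumes "models (W0 C1 C2) S"
  shows "models (S_tok {1} C1 + S_tok {2} C2) S"
proof -
  let ?Z = "(\<Sum>T\<in>ext_sets (cs_x C1) (cs_xs C1). X_tok {1} T (cs_s C1 T))
    + (\<Sum>T\<in>ext_sets (cs_x C2) (cs_xs C2). X_tok {2} T (cs_s C2 T))"
  let ?K = "if cs_F C1 \<inter> cs_F C2 = {} then TK (cs_F C1 \<union> cs_F C2) else TFalse"
  have "W0 C1 C2 = {#?K#} + ?Z"
    by (simp add: S_tok_def W0_def)
  then have "models ({#?K#} + ?Z) S"
    using assms by simp
  then have "models ({#TK (cs_F C1), TK (cs_F C2)#} + ?Z) S"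
    by (rule models_replace) (rule models_merge_K)
  moreover have "S_tok {1} C1 + S_tok {2} C2 = {#TK (cs_F C1), TK (cs_F C2)#} + ?Z"
    by (simp add: S_tok_def)
  ultimately show ?thesis
    by simp
qed

lemma ERes_reflects:
  assumes "ERes C1 C2 C3" "models (S_tok {1,2} C3) S"
  shows "models (S_tok {1} C1 + S_tok {2} C2) S"
proof -
  obtain H W1 where H: "ident\<^sup>*\<^sup>* (S_tok {1,2} C3) H" and W1: "phase1 (W0 C1 C2) W1" "phase2 W1 H"
    using assms(1) by (auto simp: ERes_def deriv_result_def)
  from H have "models H S"
    using assms(2) by (induction rule: rtranclp_induct) (auto simp: ident_models_iff)
  with W1(2) have "models W1 S"
    unfolding phase2_def by (rule rewriting_reflects) (rule rules56_reflects)
  with W1(1) have "models (W0 C1 C2) S"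
    unfolding phase1_def by (rule rewriting_reflects) (rule rules14_reflects)
  then show ?thesis
    by (rule W0_reflects)
qed

section \<open>Splitting an environment along a partition of its facts\<close>

definition records_U ::
  "var \<Rightarrow> var list \<Rightarrow> ('d, 'u, 'b) env \<Rightarrow> ('d, 'u, 'b) fact set \<Rightarrow> 'u \<Rightarrow> 'd \<Rightarrow> bool" where
  "records_U x xs e S P v \<longleftrightarrow>
     (\<exists>u\<in>set xs. v = env_asg e u \<and> Glob (AU P u) \<in> S)
   \<or> (v \<notin> env_asg e ` set xs \<and> Loc v (AU P x) \<in> S)"

text \<open>No fact records a pair of distinct anonymous elements, so such pairs always end up in
  the complementary environment.\<close>

definition records_B ::
  "var \<Rightarrow> var list \<Rightarrow> ('d, 'u, 'b) env \<Rightarrow> ('d, 'u, 'b) fact set \<Rightarrow> 'b \<Rightarrow> 'd \<Rightarrow> 'd \<Rightarrow> bool" where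
  "records_B x xs e S f v w \<longleftrightarrow>
     (\<exists>u\<in>set xs. \<exists>u'\<in>set xs. v = env_asg e u \<and> w = env_asg e u' \<and> Glob (AB f u u') \<in> S)
   \<or> (v \<notin> env_asg e ` set xs \<and> (\<exists>u'\<in>set xs. w = env_asg e u' \<and> Loc v (AB f x u') \<in> S))
   \<or> (w \<notin> env_asg e ` set xs \<and> (\<exists>u\<in>set xs. v = env_asg e u \<and> Loc w (AB f u x) \<in> S))
   \<or> (v \<notin> env_asg e ` set xs \<and> v = w \<and> Loc v (AB f x x) \<in> S)"

definition restrict_env ::
  "var \<Rightarrow> var list \<Rightarrow> ('d, 'u, 'b) fact set \<Rightarrow> ('d, 'u, 'b) env \<Rightarrow> ('d, 'u, 'b) env" where
  "restrict_env x xs S e = e\<lparr>env_U := \<lambda>P. {v \<in> env_U e P. records_U x xs e S P v},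
     env_B := \<lambda>f. {(v, w) \<in> env_B e f. records_B x xs e S f v w}\<rparr>"

definition env_diff :: "('d, 'u, 'b) env \<Rightarrow> ('d, 'u, 'b) env \<Rightarrow> ('d, 'u, 'b) env" where
  "env_diff e e' = e\<lparr>env_U := \<lambda>P. env_U e P - env_U e' P, env_B := \<lambda>f. env_B e f - env_B e' f\<rparr>"

lemma restrict_env_simps [simp]:
  "env_dom (restrict_env x xs S e) = env_dom e" "env_asg (restrict_env x xs S e) = env_asg e"
  by (simp_all add: restrict_env_def)

lemma env_diff_simps [simp]:
  "env_dom (env_diff e e') = env_dom e" "env_asg (env_diff e e') = env_asg e"
  by (simp_all add: env_diff_def)

lemma split2_restrict_env: "split2 e (restrict_env x xs S e) (env_diff e (restrict_env x xs S e))"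
  by (auto simp: split2_def restrict_env_def env_diff_def)

lemma holds_restrict_env_Glob:
  assumes "inj_on (env_asg e) (set xs)" "a \<in> atoms_over (set xs)"
  shows "holds (restrict_env x xs S e) a \<longleftrightarrow> holds e a \<and> Glob a \<in> S"
proof (cases a)
  case (AU P u)
  then have "records_U x xs e S P (env_asg e u) \<longleftrightarrow> Glob a \<in> S"
    using assms by (auto simp: records_U_def atoms_over_def inj_on_eq_iff)
  then show ?thesis
    using AU by (simp add: restrict_env_def)
next
  case (AB f u u')
  then have "records_B x xs e S f (env_asg e u) (env_asg e u') \<longleftrightarrow> Glob a \<in> S"
    using assms by (auto simp: records_B_def atoms_over_def inj_on_eq_iff)
  then show ?thesis
    using AB by (simp add: restrict_env_def)
qed

lemma holds_restrict_env_Loc: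
  assumes "inj_on (env_asg e) (set xs)" "x \<notin> set xs" "d \<notin> env_asg e ` set xs" "a \<in> atoms_x x xs"
  shows "holds (upd (restrict_env x xs S e) x d) a \<longleftrightarrow> holds (upd e x d) a \<and> Loc d a \<in> S"
proof -
  have asg: "((env_asg e)(x := d)) u = env_asg e u" if "u \<in> set xs" for u
    using that assms(2) by auto
  show ?thesis
  proof (cases a)
    case (AU P v)
    then have "v = x"
      using assms(4) by (simp add: atoms_x_def)
    moreover have "records_U x xs e S P d \<longleftrightarrow> Loc d (AU P x) \<in> S"
      using assms(3) by (auto simp: records_U_def)
    ultimately show ?thesis
      using AU by (simp add: restrict_env_def)
  next
    case (AB f u w)
    then have "u \<in> insert x (set xs)" "w \<in> insert x (set xs)" "u = x \<or> w = x"
      using assms(4) by (auto simp: atoms_x_def atoms_over_def)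
    then consider "u = x" "w = x" | "u = x" "w \<in> set xs" | "u \<in> set xs" "w = x"
      by blast
    then show ?thesis
    proof cases
      case 1
      have "records_B x xs e S f d d \<longleftrightarrow> Loc d (AB f x x) \<in> S"
        using assms(3) by (auto simp: records_B_def)
      then show ?thesis
        using AB 1 by (simp add: restrict_env_def)
    next
      case 2
      have "records_B x xs e S f d (env_asg e w) \<longleftrightarrow> Loc d (AB f x w) \<in> S"
        using assms(1,3) 2 by (auto simp: records_B_def inj_on_eq_iff)
      then show ?thesis
        using AB 2 asg by (simp add: restrict_env_def)
    next
      case 3
      have "records_B x xs e S f (env_asg e u) d \<longleftrightarrow> Loc d (AB f u x) \<in> S"
        using assms(1,3) 3 by (auto simp: records_B_def inj_on_eq_iff)
      then show ?thesis
        using AB 3 asg by (simp add: restrict_env_def)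
    qed
  qed
qed

lemma holds_env_diff: "env_asg e' = env_asg e \<Longrightarrow> holds (env_diff e e') a \<longleftrightarrow> holds e a \<and> \<not> holds e' a"
  by (cases a) (auto simp: env_diff_def)

lemma atom_facts_restrict_env:
  assumes "inj_on (env_asg e) (set xs)" "x \<notin> set xs"
  shows "atom_facts x xs (restrict_env x xs S e) = atom_facts x xs e \<inter> S"
proof (rule set_eqI)
  fix \<phi>
  show "\<phi> \<in> atom_facts x xs (restrict_env x xs S e) \<longleftrightarrow> \<phi> \<in> atom_facts x xs e \<inter> S"
  proof (cases \<phi>)
    case (Glob a)
    then show ?thesis
      using holds_restrict_env_Glob[OF assms(1)] by (auto simp: atom_facts_def)
  next
    case (Loc d a)
    then show ?thesis
      using holds_restrict_env_Loc[OF assms] by (auto simp: atom_facts_def ltype_def anon_def)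
  qed (auto simp: atom_facts_def)
qed

lemma atom_facts_env_diff:
  assumes "env_dom e' = env_dom e" "env_asg e' = env_asg e"
  shows "atom_facts x xs (env_diff e e') = atom_facts x xs e - atom_facts x xs e'"
proof -
  have "upd (env_diff e e') x d = env_diff (upd e x d) (upd e' x d)" for d
    by (simp add: upd_def env_diff_def)
  then show ?thesis
    using assms by (auto simp: atom_facts_def ltype_def anon_def holds_env_diff)
qed

lemma split_facts:
  fixes e :: "('d, 'u, 'b) env"
  assumes "inj_on (env_asg e) (set xs)" "x \<notin> set xs" "m1 \<inter> m2 = {}"
    and part: "facts x xs (m1 \<union> m2) e = S1 \<union> S2" "S1 \<inter> S2 = {}"
    and marks: "\<forall>d i. Mark d i \<in> S1 \<longrightarrow> i \<in> m1" "\<forall>d i. Mark d i \<in> S2 \<longrightarrow> i \<in> m2"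
  obtains e1 e2 where "split2 e e1 e2" "facts x xs m1 e1 = S1" "facts x xs m2 e2 = S2"
proof -
  let ?F = "atom_facts x xs e" and ?e1 = "restrict_env x xs S1 e"
  have "Mark d i \<in> S1 \<union> S2 \<longleftrightarrow> d \<in> anon xs e \<and> i \<in> m1 \<union> m2" for d i
    unfolding part(1)[symmetric] by (auto simp: facts_def marks_def atom_facts_def)
  then have "marks xs m1 e \<subseteq> S1" "marks xs m2 e \<subseteq> S2"
    using marks assms(3) unfolding marks_def by blast+
  moreover have "S1 \<subseteq> ?F \<union> marks xs m1 e" "S2 \<subseteq> ?F \<union> marks xs m2 e"
    using part marks by (auto simp: facts_def marks_def)
  moreover have "?F \<subseteq> S1 \<union> S2"
    using part(1) by (auto simp: facts_def)
  ultimately have "(?F \<inter> S1) \<union> marks xs m1 e = S1" "(?F - ?F \<inter> S1) \<union> marks xs m2 e = S2"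
    using part(2) by blast+
  moreover have "marks xs m ?e1 = marks xs m e" "marks xs m (env_diff e ?e1) = marks xs m e" for m
    by (simp_all add: marks_def anon_def)
  ultimately have "facts x xs m1 ?e1 = S1" "facts x xs m2 (env_diff e ?e1) = S2"
    by (simp_all add: facts_def atom_facts_env_diff atom_facts_restrict_env[OF assms(1,2)])
  with split2_restrict_env show ?thesis
    by (rule that)
qed

lemma split_env_of_models:
  fixes C1 C2 :: "('u::finite, 'b::finite) cstar" and e :: "('d, 'u, 'b) env"
  assumes "inj_on (env_asg e) (set xs)" "x \<notin> set xs"
    and "models (S_tok {1} C1 + S_tok {2} C2) (facts x xs {1,2} e)"
  obtains e1 e2 where "split2 e e1 e2"
    "models (S_tok {1} C1) (facts x xs {1} e1)" "models (S_tok {2} C2) (facts x xs {2} e2)"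
proof -
  obtain S1 S2 where S: "models (S_tok {1} C1) S1" "models (S_tok {2} C2) S2"
    "facts x xs ({1} \<union> {2}) e = S1 \<union> S2" "S1 \<inter> S2 = {}"
    using assms(3) by (auto simp: models_plus_iff insert_commute)
  have "\<forall>d i. Mark d i \<in> S1 \<longrightarrow> i \<in> {1}" "\<forall>d i. Mark d i \<in> S2 \<longrightarrow> i \<in> {2}"
    using Mark_in_models_S_tok[OF _ S(1)] Mark_in_models_S_tok[OF _ S(2)] by auto
  moreover have "{1::nat} \<inter> {2} = {}"
    by simp
  ultimately obtain e1 e2 where
    "split2 e e1 e2" "facts x xs {1} e1 = S1" "facts x xs {2} e2 = S2"
    using split_facts[OF assms(1,2) _ S(3,4)] by blast
  with S(1,2) show ?thesis
    using that by simp
qed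

theorem lemma17:
  fixes C1 C2 C3 :: "('u::finite, 'b::finite) cstar"
    and e :: "('d, 'u, 'b) env"
  assumes "is_cstar C1" and "is_cstar C2" and "compatible C1 C2"
    and "is_cstar C3" and "ERes C1 C2 C3"
    and "wf_env e" and "sat e (cs_fm C3)"
  shows "sat e (FStar (cs_fm C1) (cs_fm C2))"
proof -
  let ?x = "cs_x C1" and ?xs = "cs_xs C1"
  have same: "cs_E C2 = cs_E C1" "cs_xs C2 = ?xs" "cs_x C2 = ?x"
    "cs_E C3 = cs_E C1" "cs_xs C3 = ?xs" "cs_x C3 = ?x"
    using assms(3,5) by (auto simp: compatible_def ERes_def)
  have fin: "finite (env_dom e)"
    using assms(6) by (simp add: wf_env_def)
  have E: "sat e (E_fm (cs_E C1) ?xs)" and dist: "distinct (map (env_asg e) ?xs)"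
    and "models (S_tok {1,2} C3) (facts ?x ?xs {1,2} e)"
    using assms(7) sat_cs_fm_iff_models[OF assms(4) fin, of "{1,2}"] same by auto
  then have models12: "models (S_tok {1} C1 + S_tok {2} C2) (facts ?x ?xs {1,2} e)"
    by (intro ERes_reflects[OF assms(5)])
  have inj: "inj_on (env_asg e) (set ?xs)" and xn: "?x \<notin> set ?xs"
    using dist assms(1) by (simp_all add: distinct_map is_cstar_def)
  obtain e1 e2 where e12: "split2 e e1 e2"
    "models (S_tok {1} C1) (facts ?x ?xs {1} e1)" "models (S_tok {2} C2) (facts ?x ?xs {2} e2)"
    by (rule split_env_of_models[OF inj xn models12])
  then have "sat e1 (cs_fm C1)" "sat e2 (cs_fm C2)"
    using sat_cs_fm_iff_models[OF assms(1), of e1 "{1}"] sat_cs_fm_iff_models[OF assms(2), of e2 "{2}"]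
      sat_E_fm_cong[of e1 e] sat_E_fm_cong[of e2 e] E dist fin same by (simp_all add: split2_def)
  then show ?thesis
    using e12(1) by auto
qed

end
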